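(* Let $n\ge 2$ and let $\Delta^o(Q_{4n})$ be the order super commuting graph of the generalized quaternion group $Q_{4n}$. (i) If $n$ is odd, the Sombor spectrum of $\Delta^o(Q_{4n})$ consists of $-(4n-1)\sqrt2$ with multiplicity $1$, $-(2n-1)\sqrt2$ with multiplicity $2n-3$, $-(2n+1)\sqrt2$ with multiplicity $2n-1$, and the three roots (with multiplicity) of \[\big(x-(4n-1)\sqrt2\big)\big(x-(2n-1)(2n-3)\sqrt2\big)\big(x-(2n-1)(2n+1)\sqrt2\big)-8(n-1)(10n^2-6n+1)\big(x-(2n-1)(2n+1)\sqrt2\big)-8n(10n^2-2n+1)\big(x-(2n-1)(2n-3)\sqrt2\big).\] (ii) If $n$ is even, the Sombor spectrum of $\Delta^o(Q_{4n})$ consists of $-(4n-1)\sqrt2$ with multiplicity $4n-1$ and $(4n-1)^2\sqrt2$ with multiplicity $1$.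
   Context: For a finite simple graph $\Gamma$ with vertices $u_1,\dots,u_N$, the Sombor matrix $S(\Gamma)$ has $(i,j)$ entry $\sqrt{\deg(u_i)^2+\deg(u_j)^2}$ if $u_i,u_j$ are adjacent and $0$ otherwise; the Sombor spectrum is the multiset of its eigenvalues. $Q_{4n}=\langle a,b: a^{2n}=e,\ a^n=b^2,\ ba=a^{-1}b\rangle$. The order super commuting graph $\Delta^o(G)$ has vertex set $G$, and distinct $g,h$ are adjacent iff $o(g)=o(h)$ or there exist distinct $g',h'\in G$ with $o(g')=o(g)$, $o(h')=o(h)$ and $g'h'=h'g'$; here $o(x)$ is the order of $x$. *)

theory Defs
  imports "HOL-Algebra.Multiplicative_Group" "Jordan_Normal_Form.Char_Poly"
begin

text \<open>Generalized quaternion group Q_{4n} = <a,b | a^(2n)=e, a^n=b^2, ba=a^(-1)b>,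
  realised on normal forms a^i b^j, encoded as (i,j) with i < 2n, j < 2.\<close>

definition quat_mult :: "nat \<Rightarrow> nat \<times> nat \<Rightarrow> nat \<times> nat \<Rightarrow> nat \<times> nat" where
  "quat_mult n x y =
     (let (i, j) = x; (k, l) = y in
       ((i + (if j = 0 then k else 2 * n - k) + (if j = 1 \<and> l = 1 then n else 0)) mod (2 * n),
        (j + l) mod 2))"

definition Quat :: "nat \<Rightarrow> (nat \<times> nat) monoid" where
  "Quat n = \<lparr> carrier = {..<2 * n} \<times> {..<2}, monoid.mult = quat_mult n, monoid.one = (0, 0) \<rparr>"

definition osc_adj :: "('a, 'b) monoid_scheme \<Rightarrow> 'a \<Rightarrow> 'a \<Rightarrow> bool" where
  "osc_adj G g h \<longleftrightarrow> g \<in> carrier G \<and> h \<in> carrier G \<and> g \<noteq> h \<and>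
     (group.ord G g = group.ord G h \<or>
      (\<exists>g' \<in> carrier G. \<exists>h' \<in> carrier G. g' \<noteq> h' \<and>
          group.ord G g' = group.ord G g \<and> group.ord G h' = group.ord G h \<and>
          g' \<otimes>\<^bsub>G\<^esub> h' = h' \<otimes>\<^bsub>G\<^esub> g'))"

definition osc_deg :: "('a, 'b) monoid_scheme \<Rightarrow> 'a \<Rightarrow> nat" where
  "osc_deg G g = card {h \<in> carrier G. osc_adj G g h}"

definition sombor_matrix :: "('a, 'b) monoid_scheme \<Rightarrow> (nat \<Rightarrow> 'a) \<Rightarrow> real mat" where
  "sombor_matrix G u = mat (card (carrier G)) (card (carrier G))
     (\<lambda>(i, j). if osc_adj G (u i) (u j)
               then sqrt (real (osc_deg G (u i))^2 + real (osc_deg G (u j))^2) else 0)"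

end

theory Submission
  imports Defs
begin

(* For odd n the order of an element of Q_4n determines its class: the centre {1, a^n} (orders 1
   and 2), the remaining powers of a (orders not dividing 4), or the coset of b (order 4). Distinct
   elements are adjacent in the order super commuting graph unless one is a non-central power of a
   and the other lies in the coset of b: such elements never commute, and elements of the same
   orders stay in the same classes. For even n the graph is complete, since a^(n/2) has order 4
   like every a^k b and commutes with all powers of a.

   Hence the Sombor matrix has zero diagonal and is constant, off the diagonal, on the blocks of
   this partition into classes. For such a matrix, Sylvester's identity det (I - X Y) = det (I - Y X)
   gives char_poly A = (prod over classes t of (x + w_tt)^(m_t - 1)) * char_poly B, where m_t is the
   size of class t and B is the quotient matrix of the partition; it remains to compute the 3 x 3
   (n odd) or 1 x 1 (n even) quotient matrix. *)

section \<open>Equitable partitions and characteristic polynomials\<close>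

lemma det_one_minus_mult_swap:
  fixes X :: "'a :: idom mat"
  assumes X: "X \<in> carrier_mat N k" and Y: "Y \<in> carrier_mat k N"
  shows "det (1\<^sub>m N - X * Y) = det (1\<^sub>m k - Y * X)"
proof -
  define M where "M = four_block_mat (1\<^sub>m N) X Y (1\<^sub>m k)"
  have XY: "1\<^sub>m N - X * Y \<in> carrier_mat N N" and YX: "1\<^sub>m k - Y * X \<in> carrier_mat k k"
    using X Y by auto
  note det_block =
    det_four_block_mat_lower_left_zero[OF _ _ refl] det_four_block_mat_upper_right_zero[OF _ refl]
  have "M = four_block_mat (1\<^sub>m N) X (0\<^sub>m k N) (1\<^sub>m k)
      * four_block_mat (1\<^sub>m N - X * Y) (0\<^sub>m N k) Y (1\<^sub>m k)"
    unfolding M_def using X Y XY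
    by (subst mult_four_block_mat[OF one_carrier_mat X zero_carrier_mat one_carrier_mat
          XY zero_carrier_mat Y one_carrier_mat]) auto
  then have "det M = det (1\<^sub>m N - X * Y)"
    using X Y XY by (simp add: det_mult[of _ "N + k"] det_block)
  moreover have "M = four_block_mat (1\<^sub>m N) (0\<^sub>m N k) Y (1\<^sub>m k)
      * four_block_mat (1\<^sub>m N) X (0\<^sub>m k N) (1\<^sub>m k - Y * X)"
    unfolding M_def using X Y YX
    by (subst mult_four_block_mat[OF one_carrier_mat zero_carrier_mat Y one_carrier_mat
          one_carrier_mat X zero_carrier_mat YX]) auto
  then have "det M = det (1\<^sub>m k - Y * X)"
    using X Y YX by (simp add: det_mult[of _ "N + k"] det_block)
  ultimately show ?thesis by simp
qed

lemma det_mat_diag: "det (mat_diag n f) = (\<Prod>i<n. f i)"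
  by (subst det_upper_triangular[of _ n])
    (auto simp: mat_diag_def upper_triangular_def prod_list_diag_prod atLeast0LessThan)

lemma det_mat3:
  "det (mat 3 3 f) = f (0, 0) * f (1, 1) * f (2, 2) + f (0, 1) * f (1, 2) * f (2, 0) + f (0, 2) * f (1, 0) * f (2, 1)
    - f (0, 2) * f (1, 1) * f (2, 0) - f (0, 0) * f (1, 2) * f (2, 1) - f (0, 1) * f (1, 0) * f (2, 2)"
proof -
  have det2: "det (mat 2 2 g) = g (0, 0) * g (1, 1) - g (0, 1) * g (1, 0)" for g :: "nat \<times> nat \<Rightarrow> 'a"
    by (subst laplace_expansion_column[of _ 2 0])
      (auto simp: numeral_2_eq_2 cofactor_def det_single mat_delete_def)
  show ?thesis
    by (subst laplace_expansion_column[of _ 3 0])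
      (auto simp: numeral_3_eq_3 numeral_2_eq_2 cofactor_def mat_delete_def det2[unfolded numeral_2_eq_2] algebra_simps)
qed

lemma poly_char_poly_eq_det:
  fixes A :: "'a :: field mat"
  assumes "A \<in> carrier_mat k k"
  shows "poly (char_poly A) x = det (mat k k (\<lambda>(i, j). (if i = j then x else 0) - A $$ (i, j)))"
  unfolding char_poly_matrix[OF assms]
  by (rule arg_cong[of _ _ det], rule eq_matI) (use assms in \<open>auto simp: char_matrix_def\<close>)

lemma poly_eqI_cofinite:
  fixes p q :: "'a :: {idom, ring_char_0} poly"
  assumes "finite F" and "\<And>x. x \<notin> F \<Longrightarrow> poly p x = poly q x"
  shows "p = q"
proof (rule ccontr)
  assume "p \<noteq> q"
  then have "finite {x. poly (p - q) x = 0}"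
    by (intro poly_roots_finite) simp
  moreover have "UNIV \<subseteq> F \<union> {x. poly (p - q) x = 0}"
    using assms(2) by auto
  ultimately show False
    using assms(1) infinite_UNIV_char_0 by (meson finite_UnI finite_subset)
qed

definition class_card :: "nat \<Rightarrow> (nat \<Rightarrow> nat) \<Rightarrow> nat \<Rightarrow> nat" where
  "class_card N p t = card {i. i < N \<and> p i = t}"

lemma prod_class_card:
  assumes "\<And>i. i < N \<Longrightarrow> p i < k"
  shows "(\<Prod>i<N. f (p i)) = (\<Prod>t<k. f t ^ class_card N p t)"
proof -
  have "(\<Prod>i<N. f (p i)) = (\<Prod>t<k. \<Prod>i\<in>{i. i \<in> {..<N} \<and> p i = t}. f (p i))"
    by (rule prod.group[symmetric]) (use assms in auto)
  also have "\<dots> = (\<Prod>t<k. \<Prod>i\<in>{i. i < N \<and> p i = t}. f t)"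
    by (intro prod.cong) auto
  finally show ?thesis by (simp add: class_card_def)
qed

(* For A with zero diagonal and entries K (p i) (p j) off the diagonal, entry (s, t) is the sum of
   a row of class s of A over the columns of class t: the quotient matrix of the equitable
   partition given by p. *)
definition quotient_mat :: "nat \<Rightarrow> (nat \<Rightarrow> nat) \<Rightarrow> nat \<Rightarrow> (nat \<Rightarrow> nat \<Rightarrow> 'a :: comm_ring_1) \<Rightarrow> 'a mat" where
  "quotient_mat N p k K =
     mat k k (\<lambda>(s, t). of_nat (class_card N p t) * K s t - (if s = t then K t t else 0))"

lemma quotient_mat_carrier: "quotient_mat N p k K \<in> carrier_mat k k"
  by (simp add: quotient_mat_def)

lemma index_quotient_mat:
  "s < k \<Longrightarrow> t < k \<Longrightarrow>
    quotient_mat N p k K $$ (s, t) = of_nat (class_card N p t) * K s t - (if s = t then K t t else 0)"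
  by (simp add: quotient_mat_def)

lemma poly_char_poly_class_constant:
  fixes A :: "'a :: field mat"
  assumes A: "A \<in> carrier_mat N N" and p: "\<And>i. i < N \<Longrightarrow> p i < k"
    and A_eq: "\<And>i j. i < N \<Longrightarrow> j < N \<Longrightarrow> A $$ (i, j) = (if i = j then 0 else K (p i) (p j))"
    and x: "\<And>t. t < k \<Longrightarrow> x + K t t \<noteq> 0"
  shows "poly (char_poly A) x * (\<Prod>t<k. x + K t t)
    = (\<Prod>i<N. x + K (p i) (p i)) * poly (char_poly (quotient_mat N p k K)) x"
proof -
  define \<beta> where "\<beta> t = x + K t t" for t
  define X where "X = mat N k (\<lambda>(i, t). if p i = t then 1 / \<beta> t else 0)"
  define Y where "Y = mat k N (\<lambda>(s, j). K s (p j))"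
  have B: "quotient_mat N p k K \<in> carrier_mat k k" and X: "X \<in> carrier_mat N k" and Y: "Y \<in> carrier_mat k N"
    by (simp_all add: quotient_mat_def X_def Y_def)
  then have XY_dim: "X * Y \<in> carrier_mat N N" and YX_dim: "Y * X \<in> carrier_mat k k"
    and I_XY: "1\<^sub>m N - X * Y \<in> carrier_mat N N" and I_YX: "1\<^sub>m k - Y * X \<in> carrier_mat k k"
    by auto
  have XY: "(X * Y) $$ (i, j) = K (p i) (p j) / \<beta> (p i)" if "i < N" "j < N" for i j
  proof -
    have "(X * Y) $$ (i, j) = (\<Sum>t<k. (if p i = t then 1 / \<beta> t else 0) * K t (p j))"
      using that by (simp add: X_def Y_def scalar_prod_def atLeast0LessThan)
    also have "\<dots> = (\<Sum>t<k. if p i = t then K t (p j) / \<beta> t else 0)"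
      by (rule sum.cong) auto
    finally show ?thesis using p that by simp
  qed
  have YX: "(Y * X) $$ (s, t) = K s t * of_nat (class_card N p t) / \<beta> t" if "s < k" "t < k" for s t
  proof -
    have "(Y * X) $$ (s, t) = (\<Sum>i<N. K s (p i) * (if p i = t then 1 / \<beta> t else 0))"
      using that by (simp add: X_def Y_def scalar_prod_def atLeast0LessThan)
    also have "\<dots> = (\<Sum>i\<in>{i \<in> {..<N}. p i = t}. K s t / \<beta> t)"
      by (subst sum.inter_filter) (auto intro: sum.cong)
    finally show ?thesis by (simp add: class_card_def)
  qed
  have char_A: "- char_matrix A x = mat_diag N (\<lambda>i. \<beta> (p i)) * (1\<^sub>m N - X * Y)"
    using A XY_dim p x[OF p] by (subst mat_diag_mult_left[of _ N N])
      (auto simp del: index_mult_mat simp: char_matrix_def A_eq XY \<beta>_def right_diff_distrib intro!: eq_matI)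
  have char_B: "- char_matrix (quotient_mat N p k K) x = (1\<^sub>m k - Y * X) * mat_diag k \<beta>"
    using YX_dim x by (subst mat_diag_mult_right[of _ k k])
      (auto simp del: index_mult_mat simp: char_matrix_def quotient_mat_def YX \<beta>_def left_diff_distrib intro!: eq_matI)
  have "poly (char_poly A) x = (\<Prod>i<N. \<beta> (p i)) * det (1\<^sub>m N - X * Y)"
    by (simp add: char_poly_matrix[OF A] char_A det_mult[OF mat_diag_dim I_XY] det_mat_diag)
  moreover have "poly (char_poly (quotient_mat N p k K)) x = det (1\<^sub>m k - Y * X) * (\<Prod>t<k. \<beta> t)"
    unfolding char_poly_matrix[OF B] char_B by (simp add: det_mult[OF I_YX mat_diag_dim] det_mat_diag)
  ultimately show ?thesis
    using det_one_minus_mult_swap[OF X Y] by (simp add: \<beta>_def)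
qed

lemma char_poly_class_constant:
  fixes A :: "'a :: field_char_0 mat"
  assumes A: "A \<in> carrier_mat N N" and p: "\<And>i. i < N \<Longrightarrow> p i < k"
    and classes: "\<And>t. t < k \<Longrightarrow> class_card N p t \<noteq> 0"
    and A_eq: "\<And>i j. i < N \<Longrightarrow> j < N \<Longrightarrow> A $$ (i, j) = (if i = j then 0 else K (p i) (p j))"
  shows "char_poly A = (\<Prod>t<k. [:K t t, 1:] ^ (class_card N p t - 1)) * char_poly (quotient_mat N p k K)"
proof (rule poly_eqI_cofinite)
  show "finite ((\<lambda>t. - K t t) ` {..<k})" by simp
next
  fix x assume x_notin: "x \<notin> (\<lambda>t. - K t t) ` {..<k}"
  have x: "x + K t t \<noteq> 0" if "t < k" for t
    using x_notin that by (auto simp: add_eq_0_iff2)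
  define Q where "Q = (\<Prod>t<k. [:K t t, 1:] ^ (class_card N p t - 1))"
  have "poly (char_poly A) x * (\<Prod>t<k. x + K t t)
      = (\<Prod>i<N. x + K (p i) (p i)) * poly (char_poly (quotient_mat N p k K)) x"
    by (rule poly_char_poly_class_constant[OF A p A_eq x])
  also have "(\<Prod>i<N. x + K (p i) (p i)) = (\<Prod>t<k. (x + K t t) ^ class_card N p t)"
    by (rule prod_class_card[OF p])
  also have "\<dots> = poly Q x * (\<Prod>t<k. x + K t t)"
    unfolding Q_def poly_prod prod.distrib[symmetric] using classes
    by (intro prod.cong) (simp_all add: add.commute flip: power_Suc2)
  finally show "poly (char_poly A) x = poly (Q * char_poly (quotient_mat N p k K)) x"
    using x by simp
qed

section \<open>The generalized quaternion group\<close>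

lemma carrier_Quat [simp]: "carrier (Quat n) = {..<2 * n} \<times> {..<2}"
  and mult_Quat [simp]: "g \<otimes>\<^bsub>Quat n\<^esub> h = quat_mult n g h"
  and one_Quat [simp]: "\<one>\<^bsub>Quat n\<^esub> = (0, 0)"
  by (simp_all add: Quat_def)

lemma snd_quat_mult [simp]: "snd (quat_mult n (i, j) (k, l)) = (j + l) mod 2"
  by (simp add: quat_mult_def)

lemma int_fst_quat_mult:
  assumes "k \<le> 2 * n" "j < 2"
  shows "int (fst (quat_mult n (i, j) (k, l))) =
    (int i + (if j = 0 then int k else - int k) + (if j = 1 \<and> l = 1 then int n else 0)) mod (2 * int n)"
proof (cases "j = 0")
  case False
  then have "j = 1" using assms by simp
  define c where "c = int i - int k + (if l = 1 then int n else 0)"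
  have "int (fst (quat_mult n (i, j) (k, l))) = int (i + (2 * n - k) + (if l = 1 then n else 0)) mod (2 * int n)"
    using \<open>j = 1\<close> by (simp add: quat_mult_def zmod_int)
  also have "int (i + (2 * n - k) + (if l = 1 then n else 0)) = c + 2 * int n"
    using assms by (simp add: c_def of_nat_diff)
  also have "(c + 2 * int n) mod (2 * int n) = c mod (2 * int n)"
    by (rule mod_add_self2)
  finally show ?thesis
    using \<open>j = 1\<close> by (simp add: c_def)
qed (simp add: quat_mult_def zmod_int)

lemma int_fst_quat_mult_cong:
  assumes "k \<le> 2 * n" "j < 2"
    and "int i mod (2 * int n) = I mod (2 * int n)" "int k mod (2 * int n) = K mod (2 * int n)"
  shows "int (fst (quat_mult n (i, j) (k, l))) =
    (I + (if j = 0 then K else - K) + (if j = 1 \<and> l = 1 then int n else 0)) mod (2 * int n)"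
  unfolding int_fst_quat_mult[OF assms(1,2)] using assms(3,4)
  by (intro mod_add_cong) (auto intro: mod_minus_cong)

lemma quat_mult_closed:
  "g \<in> {..<2 * n} \<times> {..<2} \<Longrightarrow> h \<in> {..<2 * n} \<times> {..<2} \<Longrightarrow> quat_mult n g h \<in> {..<2 * n} \<times> {..<2}"
  by (cases g; cases h) (auto simp: quat_mult_def)

lemma quat_mult_assoc:
  assumes "x \<in> {..<2 * n} \<times> {..<2}" "y \<in> {..<2 * n} \<times> {..<2}" "z \<in> {..<2 * n} \<times> {..<2}"
  shows "quat_mult n (quat_mult n x y) z = quat_mult n x (quat_mult n y z)"
proof -
  obtain i j k l r s where xyz: "x = (i, j)" "y = (k, l)" "z = (r, s)"
    by (metis prod.exhaust)
  obtain a b c d where ab: "quat_mult n x y = (a, b)" and cd: "quat_mult n y z = (c, d)"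
    by (metis prod.exhaust)
  have range: "i < 2 * n" "k < 2 * n" "r < 2 * n" "j < 2" "l < 2" "s < 2" "a < 2 * n" "b < 2" "c < 2 * n" "d < 2"
    using quat_mult_closed[of _ n] assms ab cd xyz by (metis mem_Sigma_iff lessThan_iff)+
  define A where "A = int i + (if j = 0 then int k else - int k) + (if j = 1 \<and> l = 1 then int n else 0)"
  define C where "C = int k + (if l = 0 then int r else - int r) + (if l = 1 \<and> s = 1 then int n else 0)"
  have ac: "int a = A mod (2 * int n)" "int c = C mod (2 * int n)"
    using int_fst_quat_mult[of _ n] range ab cd xyz unfolding A_def C_def by (metis fst_conv less_imp_le)+
  have "int (fst (quat_mult n (a, b) (r, s))) =
      (A + (if b = 0 then int r else - int r) + (if b = 1 \<and> s = 1 then int n else 0)) mod (2 * int n)"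
    by (rule int_fst_quat_mult_cong) (use range ac in simp_all)
  moreover have "int (fst (quat_mult n (i, j) (c, d))) =
      (int i + (if j = 0 then C else - C) + (if j = 1 \<and> d = 1 then int n else 0)) mod (2 * int n)"
    by (rule int_fst_quat_mult_cong) (use range ac in simp_all)
  moreover have b: "b = (j + l) mod 2" and d: "d = (l + s) mod 2"
    using ab cd xyz by (metis snd_conv snd_quat_mult)+
  moreover have "j = 0 \<or> j = 1" "l = 0 \<or> l = 1" "s = 0 \<or> s = 1"
    using range by auto
  ultimately have "int (fst (quat_mult n (a, b) (r, s))) = int (fst (quat_mult n (i, j) (c, d)))"
    unfolding A_def C_def by (elim disjE) (simp_all add: mod_eq_dvd_iff algebra_simps)
  moreover have "snd (quat_mult n (a, b) (r, s)) = snd (quat_mult n (i, j) (c, d))"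
    using b d by simp presburger
  ultimately have "quat_mult n (a, b) (r, s) = quat_mult n (i, j) (c, d)"
    by (simp add: prod_eq_iff)
  then show ?thesis
    using ab cd by (simp add: xyz)
qed

lemma group_Quat:
  assumes "n > 0"
  shows "group (Quat n)"
proof (rule groupI)
  fix x assume "x \<in> carrier (Quat n)"
  then obtain i j where x: "x = (i, j)" "i < 2 * n" "j < 2"
    by auto
  show "\<exists>y \<in> carrier (Quat n). y \<otimes>\<^bsub>Quat n\<^esub> x = \<one>\<^bsub>Quat n\<^esub>"
  proof (cases "j = 0")
    case True
    have "((2 * n - i) mod (2 * n) + i) mod (2 * n) = 0"
      using x by (simp add: mod_add_left_eq)
    then show ?thesis
      using True x assms by (intro bexI[of _ "((2 * n - i) mod (2 * n), 0)"]) (auto simp: quat_mult_def)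
  next
    case False
    then have "j = 1"
      using x by simp
    have "((i + n) mod (2 * n) + (2 * n - i) + n) mod (2 * n) = ((i + n) + (2 * n - i) + n) mod (2 * n)"
      by (metis mod_add_left_eq)
    also have "\<dots> = 0"
      using x by simp
    finally show ?thesis
      using \<open>j = 1\<close> x assms by (intro bexI[of _ "((i + n) mod (2 * n), 1)"]) (auto simp: quat_mult_def)
  qed
qed (use assms in \<open>auto simp: quat_mult_closed quat_mult_assoc\<close>, auto simp: quat_mult_def)

lemma card_carrier_Quat: "card (carrier (Quat n)) = 4 * n"
  by (simp add: card_cartesian_product)

lemma quat_rotation_pow: "(k, 0) [^]\<^bsub>Quat n\<^esub> (m :: nat) = (k * m mod (2 * n), 0)"
  by (induction m) (simp_all add: quat_mult_def mod_add_left_eq algebra_simps)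

lemma quat_reflection_square:
  assumes "i < 2 * n"
  shows "(i, 1) [^]\<^bsub>Quat n\<^esub> (2 :: nat) = (n, 0)"
proof -
  have "(i + (2 * n - i) + n) mod (2 * n) = n"
    using assms by simp
  then show ?thesis
    using assms by (simp add: numeral_2_eq_2 quat_mult_def)
qed

lemma (in group) ord_eq_prime_power:
  assumes "x \<in> carrier G" "prime p" "x [^] (p ^ Suc k) = \<one>" "x [^] (p ^ k) \<noteq> \<one>"
  shows "ord x = p ^ Suc k"
proof -
  obtain m where "m \<le> Suc k" "ord x = p ^ m"
    using assms(1-3) pow_eq_id divides_primepow_nat by metis
  moreover have "\<not> ord x dvd p ^ k"
    using assms(1,4) pow_eq_id by blast
  ultimately show ?thesis
    using assms(2) by (metis le_SucE le_imp_power_dvd)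
qed

lemma ord_Quat_reflection:
  assumes "n > 0" "i < 2 * n"
  shows "group.ord (Quat n) (i, 1) = 4"
proof -
  note square = quat_reflection_square[OF assms(2)]
  have "(i, 1) [^]\<^bsub>Quat n\<^esub> (2 ^ Suc 1 :: nat) = ((i, 1) [^]\<^bsub>Quat n\<^esub> (2 :: nat)) [^]\<^bsub>Quat n\<^esub> (2 :: nat)"
    using monoid.nat_pow_pow[OF group.is_monoid[OF group_Quat], of n "(i, 1)" 2 2] assms by simp
  also have "\<dots> = \<one>\<^bsub>Quat n\<^esub>"
    unfolding square by (simp add: quat_rotation_pow)
  finally have "(i, 1) [^]\<^bsub>Quat n\<^esub> (2 ^ Suc 1 :: nat) = \<one>\<^bsub>Quat n\<^esub>" .
  then show ?thesis
    using group.ord_eq_prime_power[OF group_Quat, of n "(i, 1)" 2 1] assms square by simp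
qed

lemma ord_Quat_half_turn:
  assumes "n > 0"
  shows "group.ord (Quat n) (n, 0) = 2"
  using group.ord_eq_prime_power[OF group_Quat, of n "(n, 0)" 2 0] assms
  by (simp add: quat_rotation_pow quat_mult_def)

lemma ord_Quat_quarter_turn:
  assumes "n > 0" "even n"
  shows "group.ord (Quat n) (n div 2, 0) = 4"
  using group.ord_eq_prime_power[OF group_Quat, of n "(n div 2, 0)" 2 1] assms
  by (auto simp: quat_rotation_pow)

lemma not_ord_Quat_rotation_dvd_4:
  assumes "odd n" "k < 2 * n" "k \<noteq> 0" "k \<noteq> n"
  shows "\<not> group.ord (Quat n) (k, 0) dvd 4"
proof
  assume "group.ord (Quat n) (k, 0) dvd 4"
  then have "k * 4 mod (2 * n) = 0"
    using group.pow_eq_id[OF group_Quat, of n "(k, 0)" 4] assms by (simp add: quat_rotation_pow)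
  then have "2 * n dvd 2 * (k * 2)"
    by (simp add: mod_eq_0_iff_dvd mult.assoc)
  then have "n dvd k"
    using assms(1) coprime_dvd_mult_right_iff[of n 2 k] by simp
  then show False
    using assms by (auto elim!: dvdE simp: less_Suc_eq mult_less_cancel1)
qed

lemma quat_rotations_commute: "quat_mult n (k, 0) (l, 0) = quat_mult n (l, 0) (k, 0)"
  by (simp add: quat_mult_def add.commute)

lemma quat_rotation_reflection_commute_iff:
  assumes "k < 2 * n" "l < 2 * n"
  shows "quat_mult n (k, 0) (l, 1) = quat_mult n (l, 1) (k, 0) \<longleftrightarrow> k = 0 \<or> k = n"
proof -
  have "quat_mult n (k, 0) (l, 1) = quat_mult n (l, 1) (k, 0) \<longleftrightarrow>
      int (fst (quat_mult n (k, 0) (l, 1))) = int (fst (quat_mult n (l, 1) (k, 0)))"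
    by (simp add: prod_eq_iff)
  also have "\<dots> \<longleftrightarrow> (int k + int l) mod (2 * int n) = (int l - int k) mod (2 * int n)"
    using assms by (simp add: int_fst_quat_mult)
  also have "\<dots> \<longleftrightarrow> int n dvd int k"
    by (simp add: mod_eq_dvd_iff)
  also have "\<dots> \<longleftrightarrow> k = 0 \<or> k = n"
    using assms by (auto elim!: dvdE simp: less_Suc_eq)
  finally show ?thesis .
qed

(* A pair (i, j) encodes a^i b^j. Class 0 is the centre {1, a^n}, class 1 consists of the other
   powers of a, class 2 is the coset of b. *)
definition quat_class :: "nat \<Rightarrow> nat \<times> nat \<Rightarrow> nat" where
  "quat_class n g = (if snd g = 1 then 2 else if fst g = 0 \<or> fst g = n then 0 else 1)"

lemma quat_class_less_3: "quat_class n g < 3"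
  by (simp add: quat_class_def)

lemma card_quat_class:
  assumes "n > 0"
  shows "card {g \<in> carrier (Quat n). quat_class n g = 0} = 2"
    and "card {g \<in> carrier (Quat n). quat_class n g = 1} = 2 * n - 2"
    and "card {g \<in> carrier (Quat n). quat_class n g = 2} = 2 * n"
proof -
  have "{g \<in> carrier (Quat n). quat_class n g = 0} = {(0, 0), (n, 0)}"
    using assms by (auto simp: quat_class_def)
  then show "card {g \<in> carrier (Quat n). quat_class n g = 0} = 2"
    using assms by simp
  have "{g \<in> carrier (Quat n). quat_class n g = 1} = ({..<2 * n} - {0, n}) \<times> {0}"
    by (auto simp: quat_class_def split: if_splits)
  then show "card {g \<in> carrier (Quat n). quat_class n g = 1} = 2 * n - 2"
    using assms by (simp add: card_cartesian_product card_Diff_subset)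
  have "{g \<in> carrier (Quat n). quat_class n g = 2} = {..<2 * n} \<times> {1}"
    by (auto simp: quat_class_def split: if_splits)
  then show "card {g \<in> carrier (Quat n). quat_class n g = 2} = 2 * n"
    by (simp add: card_cartesian_product)
qed

lemma quat_class_odd_eq_ord:
  assumes "odd n" "g \<in> carrier (Quat n)"
  shows "quat_class n g = (let d = group.ord (Quat n) g in if d dvd 2 then 0 else if d = 4 then 2 else 1)"
proof -
  have n: "n > 0"
    using assms(1) by (rule odd_pos)
  obtain k j where g: "g = (k, j)" "k < 2 * n" "j < 2"
    using assms(2) by auto
  consider "j = 1" | "j = 0" "k = 0" | "j = 0" "k = n" | "j = 0" "k \<noteq> 0" "k \<noteq> n"
    using g by linarith
  then show ?thesis
  proof cases
    case 1
    then show ?thesis using g n ord_Quat_reflection by (simp add: quat_class_def)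
  next
    case 2
    then show ?thesis using g group.ord_id[OF group_Quat[OF n]] by (simp add: quat_class_def)
  next
    case 3
    then show ?thesis using g n ord_Quat_half_turn by (simp add: quat_class_def)
  next
    case 4
    then have "\<not> group.ord (Quat n) g dvd 4"
      using g assms(1) not_ord_Quat_rotation_dvd_4 by simp
    then show ?thesis
      using 4 g by (auto simp: quat_class_def Let_def intro: dvd_trans[of _ 2 4])
  qed
qed

definition quat_class_adj :: "nat \<Rightarrow> nat \<Rightarrow> bool" where
  "quat_class_adj s t \<longleftrightarrow> {s, t} \<noteq> {1, 2}"

lemma quat_commute_iff_class_adj:
  assumes "g \<in> carrier (Quat n)" "h \<in> carrier (Quat n)" "\<not> (quat_class n g = 2 \<and> quat_class n h = 2)"
  shows "quat_mult n g h = quat_mult n h g \<longleftrightarrow> quat_class_adj (quat_class n g) (quat_class n h)"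
proof -
  obtain k j l s where gh: "g = (k, j)" "h = (l, s)" "k < 2 * n" "l < 2 * n" "j < 2" "s < 2"
    using assms(1,2) by auto
  consider "j = 0" "s = 0" | "j = 0" "s = 1" | "j = 1" "s = 0"
    using gh assms(3) by (fastforce simp: quat_class_def)
  then show ?thesis
  proof cases
    case 1
    then show ?thesis using gh quat_rotations_commute by (auto simp: quat_class_def quat_class_adj_def)
  next
    case 2
    then show ?thesis using gh quat_rotation_reflection_commute_iff[of k n l]
      by (auto simp: quat_class_def quat_class_adj_def doubleton_eq_iff)
  next
    case 3
    then show ?thesis using gh quat_rotation_reflection_commute_iff[of l n k]
      by (auto simp: quat_class_def quat_class_adj_def doubleton_eq_iff)
  qed
qed

section \<open>The order super commuting graph\<close>

lemma osc_adj_sym: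
  assumes "osc_adj G g h"
  shows "osc_adj G h g"
proof (cases "group.ord G g = group.ord G h")
  case False
  then obtain g' h' where "g' \<in> carrier G" "h' \<in> carrier G" "g' \<noteq> h'"
    "group.ord G g' = group.ord G g" "group.ord G h' = group.ord G h" "g' \<otimes>\<^bsub>G\<^esub> h' = h' \<otimes>\<^bsub>G\<^esub> g'"
    using assms unfolding osc_adj_def by blast
  then have "\<exists>a \<in> carrier G. \<exists>b \<in> carrier G. a \<noteq> b \<and> group.ord G a = group.ord G h \<and>
      group.ord G b = group.ord G g \<and> a \<otimes>\<^bsub>G\<^esub> b = b \<otimes>\<^bsub>G\<^esub> a"
    by metis
  then show ?thesis
    using assms unfolding osc_adj_def by blast
qed (use assms in \<open>auto simp: osc_adj_def\<close>)

lemma osc_adj_if_ord_eq: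
  "g \<in> carrier G \<Longrightarrow> h \<in> carrier G \<Longrightarrow> g \<noteq> h \<Longrightarrow> group.ord G g = group.ord G h \<Longrightarrow> osc_adj G g h"
  by (simp add: osc_adj_def)

lemma osc_adj_if_commute_with_same_ord:
  assumes "g \<in> carrier G" "h \<in> carrier G" "h' \<in> carrier G" "g \<noteq> h" "g \<noteq> h'"
    and "group.ord G h' = group.ord G h" "g \<otimes>\<^bsub>G\<^esub> h' = h' \<otimes>\<^bsub>G\<^esub> g"
  shows "osc_adj G g h"
  using assms unfolding osc_adj_def by blast

lemma osc_deg_eq_card:
  assumes "finite (carrier G)" "g \<in> carrier G" "P g"
    and "\<And>h. h \<in> carrier G \<Longrightarrow> osc_adj G g h \<longleftrightarrow> h \<noteq> g \<and> P h"
  shows "osc_deg G g = card {h \<in> carrier G. P h} - 1"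
proof -
  have "{h \<in> carrier G. osc_adj G g h} = {h \<in> carrier G. P h} - {g}"
    using assms(4) by auto
  then show ?thesis
    using assms(1-3) by (simp add: osc_deg_def)
qed

lemma osc_adj_Quat_odd:
  assumes "odd n" "g \<in> carrier (Quat n)" "h \<in> carrier (Quat n)"
  shows "osc_adj (Quat n) g h \<longleftrightarrow> g \<noteq> h \<and> quat_class_adj (quat_class n g) (quat_class n h)"
proof
  assume adj: "osc_adj (Quat n) g h"
  have class_eq: "quat_class n x = quat_class n y"
    if "x \<in> carrier (Quat n)" "y \<in> carrier (Quat n)" "group.ord (Quat n) x = group.ord (Quat n) y" for x y
    using that assms(1) quat_class_odd_eq_ord by metis
  show "g \<noteq> h \<and> quat_class_adj (quat_class n g) (quat_class n h)"
  proof (rule ccontr)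
    assume "\<not> ?thesis"
    then have classes: "{quat_class n g, quat_class n h} = {1, 2}"
      using adj by (auto simp: osc_adj_def quat_class_adj_def)
    then have "quat_class n g \<noteq> quat_class n h"
      by (auto simp: doubleton_eq_iff)
    then have "group.ord (Quat n) g \<noteq> group.ord (Quat n) h"
      using class_eq assms by blast
    then obtain g' h' where g'h': "g' \<in> carrier (Quat n)" "h' \<in> carrier (Quat n)"
      "group.ord (Quat n) g' = group.ord (Quat n) g" "group.ord (Quat n) h' = group.ord (Quat n) h"
      "quat_mult n g' h' = quat_mult n h' g'"
      using adj by (auto simp: osc_adj_def)
    then have "quat_class n g' = quat_class n g" "quat_class n h' = quat_class n h"
      using class_eq assms by blast+
    then show False
      using g'h' classes quat_commute_iff_class_adj[of g' n h'] by (auto simp: quat_class_adj_def doubleton_eq_iff)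
  qed
next
  assume adj: "g \<noteq> h \<and> quat_class_adj (quat_class n g) (quat_class n h)"
  show "osc_adj (Quat n) g h"
  proof (cases "quat_class n g = 2 \<and> quat_class n h = 2")
    case True
    then have "group.ord (Quat n) g = group.ord (Quat n) h"
      using assms odd_pos[OF assms(1)] ord_Quat_reflection by (auto simp: quat_class_def split: if_splits)
    then show ?thesis
      using adj assms by (simp add: osc_adj_if_ord_eq)
  next
    case False
    then have "quat_mult n g h = quat_mult n h g"
      using adj assms quat_commute_iff_class_adj by blast
    then show ?thesis
      using adj assms by (intro osc_adj_if_commute_with_same_ord[of g _ h h]) auto
  qed
qed

lemma osc_adj_Quat_even:
  assumes "even n" "n > 0" "g \<in> carrier (Quat n)" "h \<in> carrier (Quat n)"
  shows "osc_adj (Quat n) g h \<longleftrightarrow> g \<noteq> h"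
proof
  define z where "z = (n div 2, 0 :: nat)"
  have z: "z \<in> carrier (Quat n)" "group.ord (Quat n) z = 4"
    using assms ord_Quat_quarter_turn by (auto simp: z_def)
  have rotation_reflection: "osc_adj (Quat n) (k, 0) (l, 1)" if "k < 2 * n" "l < 2 * n" for k l
  proof (cases "(k, 0) = z")
    case True
    then show ?thesis
      using that z assms(2) ord_Quat_reflection by (auto intro: osc_adj_if_ord_eq)
  next
    case False
    then show ?thesis
      using that z assms(2) ord_Quat_reflection quat_rotations_commute
      by (intro osc_adj_if_commute_with_same_ord[of _ _ _ z]) (auto simp: z_def)
  qed
  assume "g \<noteq> h"
  obtain k j l s where gh: "g = (k, j)" "h = (l, s)" "k < 2 * n" "l < 2 * n" "j < 2" "s < 2"
    using assms(3,4) by auto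
  consider "j = 0" "s = 0" | "j = 1" "s = 1" | "j = 0" "s = 1" | "j = 1" "s = 0"
    using gh by linarith
  then show "osc_adj (Quat n) g h"
  proof cases
    case 1
    then show ?thesis
      using gh \<open>g \<noteq> h\<close> quat_rotations_commute[of n k l]
      by (intro osc_adj_if_commute_with_same_ord[of g _ h h]) auto
  next
    case 2
    then show ?thesis
      using gh assms(2) \<open>g \<noteq> h\<close> ord_Quat_reflection by (auto intro: osc_adj_if_ord_eq)
  next
    case 3
    then show ?thesis
      using gh rotation_reflection[of k l] by simp
  next
    case 4
    then show ?thesis
      using gh rotation_reflection[of l k] osc_adj_sym by simp
  qed
qed (simp add: osc_adj_def)

definition quat_class_deg :: "nat \<Rightarrow> nat \<Rightarrow> nat" where
  "quat_class_deg n t = (if t = 0 then 4 * n - 1 else if t = 1 then 2 * n - 1 else 2 * n + 1)"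

lemma osc_deg_Quat_odd:
  assumes "odd n" "g \<in> carrier (Quat n)"
  shows "osc_deg (Quat n) g = quat_class_deg n (quat_class n g)"
proof -
  have n: "n > 0"
    using assms(1) by (rule odd_pos)
  define c where "c = quat_class n g"
  define excluded :: "nat set" where "excluded = (if c = 1 then {2} else if c = 2 then {1} else {})"
  have "osc_deg (Quat n) g = card {h \<in> carrier (Quat n). quat_class_adj c (quat_class n h)} - 1"
    using assms osc_adj_Quat_odd unfolding c_def
    by (intro osc_deg_eq_card) (auto simp: quat_class_adj_def)
  also have "{h \<in> carrier (Quat n). quat_class_adj c (quat_class n h)} =
      carrier (Quat n) - {h \<in> carrier (Quat n). quat_class n h \<in> excluded}"
    by (auto simp: excluded_def quat_class_adj_def doubleton_eq_iff)
  finally have "osc_deg (Quat n) g = 4 * n - card {h \<in> carrier (Quat n). quat_class n h \<in> excluded} - 1"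
    by (simp add: card_Diff_subset card_carrier_Quat)
  moreover have "c = 0 \<or> c = 1 \<or> c = 2"
    using quat_class_less_3[of n g] by (auto simp: c_def)
  ultimately show ?thesis
    using n card_quat_class[OF n] by (auto simp: excluded_def c_def quat_class_deg_def)
qed

lemma osc_deg_Quat_even:
  assumes "even n" "n > 0" "g \<in> carrier (Quat n)"
  shows "osc_deg (Quat n) g = 4 * n - 1"
proof -
  have "osc_deg (Quat n) g = card {h \<in> carrier (Quat n). True} - 1"
    using assms osc_adj_Quat_even by (intro osc_deg_eq_card) auto
  then show ?thesis
    by (simp add: card_carrier_Quat)
qed

section \<open>Sombor matrices\<close>

definition sombor_weight :: "(nat \<Rightarrow> nat \<Rightarrow> bool) \<Rightarrow> (nat \<Rightarrow> nat) \<Rightarrow> nat \<Rightarrow> nat \<Rightarrow> real" where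
  "sombor_weight R d s t = (if R s t then sqrt (real (d s) ^ 2 + real (d t) ^ 2) else 0)"

lemma sombor_weight_diag: "R t t \<Longrightarrow> sombor_weight R d t t = real (d t) * sqrt 2"
  by (simp add: sombor_weight_def real_sqrt_mult[of 2, simplified mult_2[symmetric]] mult.commute)

lemma class_card_bij_betw:
  assumes "bij_betw u {..<N} A"
  shows "class_card N (\<lambda>i. c (u i)) t = card {a \<in> A. c a = t}"
proof -
  have "{a \<in> A. c a = t} = u ` {i. i < N \<and> c (u i) = t}"
    using assms by (auto simp: bij_betw_def)
  moreover have "inj_on u {i. i < N \<and> c (u i) = t}"
    using bij_betw_imp_inj_on[OF assms] by (rule inj_on_subset) auto
  ultimately show ?thesis
    by (simp add: class_card_def card_image)
qed

lemma sombor_matrix_class_constant: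
  assumes u: "bij_betw u {..<N} (carrier G)"
    and adj: "\<And>g h. g \<in> carrier G \<Longrightarrow> h \<in> carrier G \<Longrightarrow> osc_adj G g h \<longleftrightarrow> g \<noteq> h \<and> R (c g) (c h)"
    and deg: "\<And>g. g \<in> carrier G \<Longrightarrow> osc_deg G g = d (c g)"
  shows "sombor_matrix G u \<in> carrier_mat N N"
    and "\<And>i j. i < N \<Longrightarrow> j < N \<Longrightarrow>
      sombor_matrix G u $$ (i, j) = (if i = j then 0 else sombor_weight R d (c (u i)) (c (u j)))"
proof -
  have N: "card (carrier G) = N"
    using bij_betw_same_card[OF u] by simp
  then show "sombor_matrix G u \<in> carrier_mat N N"
    by (simp add: sombor_matrix_def)
  fix i j assume "i < N" "j < N"
  then have "u i \<in> carrier G" "u j \<in> carrier G" "u i = u j \<longleftrightarrow> i = j"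
    using u by (auto simp: bij_betw_def inj_on_eq_iff)
  then show "sombor_matrix G u $$ (i, j) = (if i = j then 0 else sombor_weight R d (c (u i)) (c (u j)))"
    using \<open>i < N\<close> \<open>j < N\<close> N by (simp add: sombor_matrix_def sombor_weight_def adj deg)
qed

lemma char_poly_sombor_matrix_class_constant:
  assumes u: "bij_betw u {..<N} (carrier G)"
    and classes: "\<And>g. g \<in> carrier G \<Longrightarrow> c g < k"
    and nonempty: "\<And>t. t < k \<Longrightarrow> card {g \<in> carrier G. c g = t} \<noteq> 0"
    and adj: "\<And>g h. g \<in> carrier G \<Longrightarrow> h \<in> carrier G \<Longrightarrow> osc_adj G g h \<longleftrightarrow> g \<noteq> h \<and> R (c g) (c h)"
    and deg: "\<And>g. g \<in> carrier G \<Longrightarrow> osc_deg G g = d (c g)"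
  shows "char_poly (sombor_matrix G u) =
    (\<Prod>t<k. [:sombor_weight R d t t, 1:] ^ (card {g \<in> carrier G. c g = t} - 1))
    * char_poly (quotient_mat N (\<lambda>i. c (u i)) k (sombor_weight R d))"
  using char_poly_class_constant[OF sombor_matrix_class_constant(1)[OF u adj deg], of "\<lambda>i. c (u i)" k]
    sombor_matrix_class_constant(2)[OF u adj deg] class_card_bij_betw[OF u] classes nonempty
    bij_betwE[OF u]
  by simp

lemma real_quat_class_deg:
  assumes "n > 0"
  shows "real (quat_class_deg n 0) = 4 * real n - 1" "real (quat_class_deg n 1) = 2 * real n - 1"
    "real (quat_class_deg n 2) = 2 * real n + 1"
  using assms by (simp_all add: quat_class_deg_def of_nat_diff)

lemma sombor_weight_Quat_odd_diag:
  assumes "n > 0"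
  shows "sombor_weight quat_class_adj (quat_class_deg n) 0 0 = (4 * real n - 1) * sqrt 2"
    "sombor_weight quat_class_adj (quat_class_deg n) 1 1 = (2 * real n - 1) * sqrt 2"
    "sombor_weight quat_class_adj (quat_class_deg n) 2 2 = (2 * real n + 1) * sqrt 2"
  using real_quat_class_deg[OF assms] by (simp_all add: sombor_weight_diag quat_class_adj_def)

lemma char_poly_quotient_Quat_odd:
  assumes n: "n \<ge> 2"
    and cards: "class_card N p 0 = 2" "class_card N p 1 = 2 * n - 2" "class_card N p 2 = 2 * n"
  shows "char_poly (quotient_mat N p 3 (sombor_weight quat_class_adj (quat_class_deg n))) =
      [: - (4 * real n - 1) * sqrt 2, 1 :]
    * [: - (2 * real n - 1) * (2 * real n - 3) * sqrt 2, 1 :]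
    * [: - (2 * real n - 1) * (2 * real n + 1) * sqrt 2, 1 :]
    - smult (8 * (real n - 1) * (10 * (real n)^2 - 6 * real n + 1))
        [: - (2 * real n - 1) * (2 * real n + 1) * sqrt 2, 1 :]
    - smult (8 * real n * (10 * (real n)^2 - 2 * real n + 1))
        [: - (2 * real n - 1) * (2 * real n - 3) * sqrt 2, 1 :]"
    (is "char_poly ?B = ?cubic")
proof (intro poly_eq_poly_eq_iff[THEN iffD1] ext)
  fix x
  define W where "W = sombor_weight quat_class_adj (quat_class_deg n)"
  define r where "r = real n"
  have deg: "real (quat_class_deg n 0) = 4 * r - 1" "real (quat_class_deg n 1) = 2 * r - 1"
    "real (quat_class_deg n 2) = 2 * r + 1"
    using real_quat_class_deg[of n] n by (simp_all add: r_def)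
  have W: "W 0 0 = (4 * r - 1) * sqrt 2" "W 1 1 = (2 * r - 1) * sqrt 2" "W 2 2 = (2 * r + 1) * sqrt 2"
    using sombor_weight_Quat_odd_diag n by (simp_all add: W_def r_def)
  have W_sym: "W 1 2 = 0" "W 2 1 = 0" "W 1 0 = W 0 1" "W 2 0 = W 0 2"
    by (simp_all add: W_def sombor_weight_def quat_class_adj_def insert_commute add.commute)
  have W_sq: "W 0 1 * W 0 1 = (4 * r - 1)^2 + (2 * r - 1)^2" "W 0 2 * W 0 2 = (4 * r - 1)^2 + (2 * r + 1)^2"
    using deg by (simp_all add: W_def sombor_weight_def quat_class_adj_def doubleton_eq_iff)
  have class_sizes: "real (class_card N p 0) = 2" "real (class_card N p 1) = 2 * r - 2"
    "real (class_card N p 2) = 2 * r"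
    using cards n by (simp_all add: r_def of_nat_diff)
  have B: "?B $$ (0, 0) = (4 * r - 1) * sqrt 2" "?B $$ (1, 1) = (2 * r - 1) * (2 * r - 3) * sqrt 2"
    "?B $$ (2, 2) = (2 * r - 1) * (2 * r + 1) * sqrt 2" "?B $$ (1, 2) = 0" "?B $$ (2, 1) = 0"
    "?B $$ (0, 1) * ?B $$ (1, 0) = 2 * (2 * r - 2) * (W 0 1 * W 0 1)"
    "?B $$ (0, 2) * ?B $$ (2, 0) = 2 * (2 * r) * (W 0 2 * W 0 2)"
    \<comment> \<open>the simplifier writes the class index 1 as Suc 0 here, so the rules are normalised alike\<close>
    by (simp_all add: index_quotient_mat W_def[symmetric] class_sizes[simplified] W[simplified]
        W_sym[simplified] algebra_simps)
  have "poly (char_poly ?B) x = (x - ?B $$ (0, 0)) * (x - ?B $$ (1, 1)) * (x - ?B $$ (2, 2))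
      - ?B $$ (0, 1) * ?B $$ (1, 0) * (x - ?B $$ (2, 2)) - ?B $$ (0, 2) * ?B $$ (2, 0) * (x - ?B $$ (1, 1))"
    by (simp add: poly_char_poly_eq_det[OF quotient_mat_carrier] det_mat3 B(4,5)[simplified]
        algebra_simps)
  then show "poly (char_poly ?B) x = poly ?cubic x"
    unfolding B W_sq by (simp add: r_def algebra_simps power2_eq_square)
qed

lemma char_poly_quotient_Quat_even:
  assumes "n > 0" "class_card N p 0 = 4 * n"
  shows "char_poly (quotient_mat N p 1 (sombor_weight (\<lambda>_ _. True) (\<lambda>_. 4 * n - 1))) =
    [: - ((4 * real n - 1)^2 * sqrt 2), 1 :]"
    (is "char_poly ?B = _")
proof (intro poly_eq_poly_eq_iff[THEN iffD1] ext)
  fix x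
  have "?B $$ (0, 0) = (4 * real n - 1)^2 * sqrt 2"
    using assms by (simp add: index_quotient_mat sombor_weight_diag of_nat_diff algebra_simps power2_eq_square)
  then show "poly (char_poly ?B) x = poly [: - ((4 * real n - 1)^2 * sqrt 2), 1 :] x"
    by (simp add: poly_char_poly_eq_det[OF quotient_mat_carrier] det_single)
qed

lemma char_poly_sombor_Quat_odd:
  assumes n: "n \<ge> 2" "odd n" and u: "bij_betw u {..<4 * n} (carrier (Quat n))"
  shows "char_poly (sombor_matrix (Quat n) u) =
             [: (4 * real n - 1) * sqrt 2, 1 :]
           * [: (2 * real n - 1) * sqrt 2, 1 :] ^ (2 * n - 3)
           * [: (2 * real n + 1) * sqrt 2, 1 :] ^ (2 * n - 1)
           * ( [: - (4 * real n - 1) * sqrt 2, 1 :]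
               * [: - (2 * real n - 1) * (2 * real n - 3) * sqrt 2, 1 :]
               * [: - (2 * real n - 1) * (2 * real n + 1) * sqrt 2, 1 :]
             - smult (8 * (real n - 1) * (10 * (real n)^2 - 6 * real n + 1))
                 [: - (2 * real n - 1) * (2 * real n + 1) * sqrt 2, 1 :]
             - smult (8 * real n * (10 * (real n)^2 - 2 * real n + 1))
                 [: - (2 * real n - 1) * (2 * real n - 3) * sqrt 2, 1 :])"
    (is "_ = ?linear * ?cubic")
proof -
  define W where "W = sombor_weight quat_class_adj (quat_class_deg n)"
  define card_class where "card_class t = card {g \<in> carrier (Quat n). quat_class n g = t}" for t
  have cards: "card_class 0 = 2" "card_class 1 = 2 * n - 2" "card_class 2 = 2 * n"
    using card_quat_class[of n] n by (simp_all add: card_class_def)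
  have "char_poly (sombor_matrix (Quat n) u) =
      (\<Prod>t<3. [:W t t, 1:] ^ (card_class t - 1)) * char_poly (quotient_mat (4 * n) (\<lambda>i. quat_class n (u i)) 3 W)"
    unfolding W_def card_class_def
  proof (rule char_poly_sombor_matrix_class_constant[OF u])
    show "card {g \<in> carrier (Quat n). quat_class n g = t} \<noteq> 0" if t: "t < 3" for t
    proof -
      consider "t = 0" | "t = 1" | "t = 2"
        using t by (auto simp: less_Suc_eq numeral_3_eq_3)
      then show ?thesis
        using cards n unfolding card_class_def by cases simp_all
    qed
  qed (use n quat_class_less_3 osc_adj_Quat_odd osc_deg_Quat_odd in auto)
  also have "(\<Prod>t<3. [:W t t, 1:] ^ (card_class t - 1)) =
      [:W 0 0, 1:] ^ (card_class 0 - 1) * [:W 1 1, 1:] ^ (card_class 1 - 1) * [:W 2 2, 1:] ^ (card_class 2 - 1)"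
    by (simp add: insert_commute lessThan_nat_numeral mult_ac)
  also have "\<dots> = ?linear"
    using n by (simp only: cards W_def sombor_weight_Quat_odd_diag diff_diff_left) simp
  also have "char_poly (quotient_mat (4 * n) (\<lambda>i. quat_class n (u i)) 3 W) = ?cubic"
    unfolding W_def using n cards
    by (intro char_poly_quotient_Quat_odd) (simp_all add: class_card_bij_betw[OF u] card_class_def)
  finally show ?thesis .
qed

lemma char_poly_sombor_Quat_even:
  assumes n: "n > 0" "even n" and u: "bij_betw u {..<4 * n} (carrier (Quat n))"
  shows "char_poly (sombor_matrix (Quat n) u) =
    [: (4 * real n - 1) * sqrt 2, 1 :] ^ (4 * n - 1) * [: - ((4 * real n - 1)^2 * sqrt 2), 1 :]"
proof -
  define W where "W = sombor_weight (\<lambda>_ _. True) (\<lambda>_. 4 * n - 1)"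
  have "char_poly (sombor_matrix (Quat n) u) =
      (\<Prod>t<1. [:W t t, 1:] ^ (card {g \<in> carrier (Quat n). 0 = t} - 1))
      * char_poly (quotient_mat (4 * n) (\<lambda>i. 0) 1 W)"
    unfolding W_def using n card_carrier_Quat[of n] osc_adj_Quat_even osc_deg_Quat_even
    by (intro char_poly_sombor_matrix_class_constant[OF u]) auto
  also have "char_poly (quotient_mat (4 * n) (\<lambda>i. 0) 1 W) = [: - ((4 * real n - 1)^2 * sqrt 2), 1 :]"
    unfolding W_def using n by (intro char_poly_quotient_Quat_even) (simp_all add: class_card_def)
  finally show ?thesis
    using n by (simp add: W_def card_carrier_Quat sombor_weight_diag of_nat_diff)
qed

theorem corollary4p5:
  fixes n :: nat and u :: "nat \<Rightarrow> nat \<times> nat"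
  assumes "n \<ge> 2"
    and "bij_betw u {..<4 * n} (carrier (Quat n))"
  shows "(odd n \<longrightarrow>
           char_poly (sombor_matrix (Quat n) u) =
             [: (4 * real n - 1) * sqrt 2, 1 :]
           * [: (2 * real n - 1) * sqrt 2, 1 :] ^ (2 * n - 3)
           * [: (2 * real n + 1) * sqrt 2, 1 :] ^ (2 * n - 1)
           * ( [: - (4 * real n - 1) * sqrt 2, 1 :]
               * [: - (2 * real n - 1) * (2 * real n - 3) * sqrt 2, 1 :]
               * [: - (2 * real n - 1) * (2 * real n + 1) * sqrt 2, 1 :]
             - smult (8 * (real n - 1) * (10 * (real n)^2 - 6 * real n + 1))
                 [: - (2 * real n - 1) * (2 * real n + 1) * sqrt 2, 1 :]
             - smult (8 * real n * (10 * (real n)^2 - 2 * real n + 1))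
                 [: - (2 * real n - 1) * (2 * real n - 3) * sqrt 2, 1 :])) \<and>
         (even n \<longrightarrow>
           char_poly (sombor_matrix (Quat n) u) =
             [: (4 * real n - 1) * sqrt 2, 1 :] ^ (4 * n - 1)
           * [: - ((4 * real n - 1)^2 * sqrt 2), 1 :])"
  using char_poly_sombor_Quat_odd[OF assms(1) _ assms(2)] char_poly_sombor_Quat_even[OF _ _ assms(2)] assms(1)
  by simp

end
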